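(* Let $\Gamma\cup\{\varphi\}\subseteq{\bf F}(\Sigma,\mathcal{V})$ be finite. If $\Gamma\vdash_{\mathbb{T}_1}\varphi$ then $\Gamma\vDash^{\mathsf{RN}}_{\mathcal{RM}_{C_1}}\varphi$.
   Context: $\Sigma$ has unary $\neg$ and binary $\wedge,\vee,\to$. $\mathcal{A}_{C_1}$ is the $\Sigma$-multialgebra on $\{F,t,T\}$, $D=\{t,T\}$: $F\tilde\vee F=\{F\}$, $F\tilde\vee T=T\tilde\vee F=T\tilde\vee T=\{T\}$, $x\tilde\vee y=D$ if $t\in\{x,y\}$; $x\tilde\wedge y=\{F\}$ if $F\in\{x,y\}$, $T\tilde\wedge T=\{T\}$, $t\tilde\wedge t=t\tilde\wedge T=T\tilde\wedge t=D$; $\tilde\neg F=\{T\}$, $\tilde\neg t=D$, $\tilde\neg T=\{F\}$; $F\tilde\to F=F\tilde\to T=T\tilde\to T=\{T\}$, $t\tilde\to F=T\tilde\to F=\{F\}$, $x\tilde\to t=D$, $t\tilde\to T=D$. Valuations: $\nu(\neg\alpha)\in\tilde\neg\nu(\alpha)$, $\nu(\alpha\#\beta)\in\nu(\alpha)\tilde\#\nu(\beta)$; $\mathcal{F}_{C_1}$ = valuations with $\nu(\alpha)=t\Rightarrow\nu(\alpha\wedge\neg\alpha)=T$. $\Gamma\vDash^{\mathsf{RN}}_{\mathcal{RM}_{C_1}}\varphi$ iff every $\nu\in\mathcal{F}_{C_1}$ with $\nu[\Gamma]\subseteq D$ has $\nu(\varphi)\in D$. Tableau system $\mathbb{T}_1$: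 signed formulas $\mathsf{L}(\varphi)$ with $\mathsf{L}\in\{\mathsf{T},\mathsf{t},\mathsf{F}\}$. Rules (branches separated by $\mid$; commas inside a branch list formulas added together): $\mathsf{T}(\neg\varphi)$: $\mathsf{F}(\varphi)\mid\mathsf{t}(\varphi)$; $\mathsf{t}(\neg\varphi)$: $\mathsf{t}(\varphi)$; $\mathsf{F}(\neg\varphi)$: $\mathsf{T}(\varphi)$; $\mathsf{T}(\varphi\wedge\psi)$: $\mathsf{T}\varphi,\mathsf{T}\psi\mid\mathsf{T}\varphi,\mathsf{t}\psi\mid\mathsf{t}\varphi,\mathsf{T}\psi\mid\mathsf{t}\varphi,\mathsf{t}\psi$; $\mathsf{t}(\varphi\wedge\psi)$: $\mathsf{T}\varphi,\mathsf{t}\psi\mid\mathsf{t}\varphi,\mathsf{T}\psi\mid\mathsf{t}\varphi,\mathsf{t}\psi$; $\mathsf{F}(\varphi\wedge\psi)$: $\mathsf{F}\varphi\mid\mathsf{F}\psi$; $\mathsf{T}(\varphi\vee\psi)$: $\mathsf{T}\varphi\mid\mathsf{t}\varphi\mid\mathsf{T}\psi\mid\mathsf{t}\psi$; $\mathsf{t}(\varphi\vee\psi)$: $\mathsf{t}\varphi\mid\mathsf{t}\psi$; $\mathsf{F}(\varphi\vee\psi)$: $\mathsf{F}\varphi,\mathsf{F}\psi$; $\mathsf{T}(\varphi\to\psi)$: $\mathsf{F}\varphi\mid\mathsf{T}\psi\mid\mathsf{t}\psi$; $\mathsf{t}(\varphi\to\psi)$: $\mathsf{t}\varphi,\mathsf{T}\psi\mid\mathsf{t}\psi$;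 $\mathsf{F}(\varphi\to\psi)$: $\mathsf{T}\varphi,\mathsf{F}\psi\mid\mathsf{t}\varphi,\mathsf{F}\psi$. A branch is closed if it contains $\mathsf{L}(\psi)$ and $\mathsf{L}'(\psi)$ with $\mathsf{L}\ne\mathsf{L}'$, or some $\mathsf{t}(\psi\wedge\neg\psi)$. A tableau is closed if all its branches are closed (i.e., it contains no open complete branch). $\vdash_{\mathbb{T}_1}\varphi$ iff there is a closed tableau starting from $\mathsf{F}(\varphi)$; for $\Gamma=\{\gamma_1,\dots,\gamma_n\}$, $\Gamma\vdash_{\mathbb{T}_1}\varphi$ iff $\vdash_{\mathbb{T}_1}\gamma_1\to(\gamma_2\to\dots(\gamma_n\to\varphi)\dots)$. *)

theory Defs
  imports Main
begin

datatype 'v fm = Var 'v | Neg "'v fm" | And "'v fm" "'v fm" | Or "'v fm" "'v fm" | Imp "'v fm" "'v fm"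

datatype tv = vF | vt | vT

definition Dset :: "tv set" where "Dset = {vt, vT}"

fun mor :: "tv \<Rightarrow> tv \<Rightarrow> tv set" where
  "mor vF vF = {vF}"
| "mor vF vT = {vT}"
| "mor vT vF = {vT}"
| "mor vT vT = {vT}"
| "mor _ _ = Dset"

fun mand :: "tv \<Rightarrow> tv \<Rightarrow> tv set" where
  "mand vF _ = {vF}"
| "mand _ vF = {vF}"
| "mand vT vT = {vT}"
| "mand _ _ = Dset"

fun mneg :: "tv \<Rightarrow> tv set" where
  "mneg vF = {vT}"
| "mneg vt = Dset"
| "mneg vT = {vF}"

fun mimp :: "tv \<Rightarrow> tv \<Rightarrow> tv set" where
  "mimp vF vF = {vT}"
| "mimp vF vT = {vT}"
| "mimp vT vT = {vT}"
| "mimp vt vF = {vF}"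
| "mimp vT vF = {vF}"
| "mimp _ vt = Dset"
| "mimp vt vT = Dset"

definition valuation :: "('v fm \<Rightarrow> tv) \<Rightarrow> bool" where
  "valuation \<nu> \<longleftrightarrow>
     (\<forall>a. \<nu> (Neg a) \<in> mneg (\<nu> a)) \<and>
     (\<forall>a b. \<nu> (And a b) \<in> mand (\<nu> a) (\<nu> b)) \<and>
     (\<forall>a b. \<nu> (Or a b) \<in> mor (\<nu> a) (\<nu> b)) \<and>
     (\<forall>a b. \<nu> (Imp a b) \<in> mimp (\<nu> a) (\<nu> b))"

definition FC1 :: "('v fm \<Rightarrow> tv) set" where
  "FC1 = {\<nu>. valuation \<nu> \<and> (\<forall>a. \<nu> a = vt \<longrightarrow> \<nu> (And a (Neg a)) = vT)}"

definition RN_entails :: "'v fm set \<Rightarrow> 'v fm \<Rightarrow> bool" where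
  "RN_entails \<Gamma> \<phi> \<longleftrightarrow> (\<forall>\<nu>\<in>FC1. \<nu> ` \<Gamma> \<subseteq> Dset \<longrightarrow> \<nu> \<phi> \<in> Dset)"

datatype lbl = LT | Lt | LF

type_synonym 'v sfm = "lbl \<times> 'v fm"

text \<open>Each rule yields a list of branches; each branch is a list of signed formulas
  added together. Atoms have no rule (empty list).\<close>
fun rules :: "'v sfm \<Rightarrow> 'v sfm list list" where
  "rules (LT, Neg a) = [[(LF, a)], [(Lt, a)]]"
| "rules (Lt, Neg a) = [[(Lt, a)]]"
| "rules (LF, Neg a) = [[(LT, a)]]"
| "rules (LT, And a b) = [[(LT,a),(LT,b)], [(LT,a),(Lt,b)], [(Lt,a),(LT,b)], [(Lt,a),(Lt,b)]]"
| "rules (Lt, And a b) = [[(LT,a),(Lt,b)], [(Lt,a),(LT,b)], [(Lt,a),(Lt,b)]]"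
| "rules (LF, And a b) = [[(LF,a)], [(LF,b)]]"
| "rules (LT, Or a b) = [[(LT,a)], [(Lt,a)], [(LT,b)], [(Lt,b)]]"
| "rules (Lt, Or a b) = [[(Lt,a)], [(Lt,b)]]"
| "rules (LF, Or a b) = [[(LF,a),(LF,b)]]"
| "rules (LT, Imp a b) = [[(LF,a)], [(LT,b)], [(Lt,b)]]"
| "rules (Lt, Imp a b) = [[(Lt,a),(LT,b)], [(Lt,b)]]"
| "rules (LF, Imp a b) = [[(LT,a),(LF,b)], [(Lt,a),(LF,b)]]"
| "rules (_, Var _) = []"

definition branch_closed :: "'v sfm set \<Rightarrow> bool" where
  "branch_closed S \<longleftrightarrow>
     (\<exists>L L' \<psi>. L \<noteq> L' \<and> (L, \<psi>) \<in> S \<and> (L', \<psi>) \<in> S) \<or>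
     (\<exists>\<psi>. (Lt, And \<psi> (Neg \<psi>)) \<in> S)"

text \<open>closable S: there is a (finite) closed tableau extending a branch whose
  formulas are S, i.e. either S is closed, or some rule applied to a signed formula
  of S yields branches each of which is closable.\<close>
inductive closable :: "'v sfm set \<Rightarrow> bool" where
  cl_closed: "branch_closed S \<Longrightarrow> closable S"
| cl_rule: "s \<in> S \<Longrightarrow> rules s \<noteq> [] \<Longrightarrow>
            (\<forall>B\<in>set (rules s). closable (S \<union> set B)) \<Longrightarrow> closable S"
monos Ball_def

definition T1_proves :: "'v fm \<Rightarrow> bool" where
  "T1_proves \<phi> \<longleftrightarrow> closable {(LF, \<phi>)}"

text \<open>Gamma = {g1,...,gn} derives phi iff |- g1 -> (g2 -> ... (gn -> phi)).\<close>
definition T1_derives :: "'v fm set \<Rightarrow> 'v fm \<Rightarrow> bool" where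
  "T1_derives \<Gamma> \<phi> \<longleftrightarrow>
     (\<exists>gs. set gs = \<Gamma> \<and> distinct gs \<and> T1_proves (foldr Imp gs \<phi>))"

end

theory Submission
  imports Defs
begin

text \<open>Read a signed formula \<open>L(\<psi>)\<close> as the claim that the
  valuation gives \<open>\<psi>\<close> the truth value named by \<open>L\<close>. Every rule is a case split of the
  corresponding multioperation, so a valuation satisfying the premise satisfies some branch;
  a closed branch is unsatisfiable, since labels name distinct values and \<open>t(\<psi> \<and> \<not>\<psi>)\<close> is
  excluded by the defining condition of \<open>F\<^sub>C\<^sub>1\<close>. Hence no valuation of \<open>F\<^sub>C\<^sub>1\<close> gives
  \<open>\<gamma>\<^sub>1 \<rightarrow> \<dots> \<rightarrow> \<phi>\<close> the value \<open>F\<close>, and since \<open>\<tilde>\<rightarrow>\<close> yields \<open>F\<close> exactly when a designated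
  antecedent meets the consequent \<open>F\<close>, designated premises force a designated \<open>\<phi>\<close>.\<close>

fun lbl_value :: "lbl \<Rightarrow> tv" where
  "lbl_value LT = vT"
| "lbl_value Lt = vt"
| "lbl_value LF = vF"

fun holds :: "('v fm \<Rightarrow> tv) \<Rightarrow> 'v sfm \<Rightarrow> bool" where
  "holds \<nu> (L, a) \<longleftrightarrow> \<nu> a = lbl_value L"

lemma lbl_value_inj: "lbl_value L = lbl_value L' \<Longrightarrow> L = L'"
  by (cases L; cases L') auto

lemma valuationD:
  assumes "valuation \<nu>"
  shows "\<nu> (Neg a) \<in> mneg (\<nu> a)" "\<nu> (And a b) \<in> mand (\<nu> a) (\<nu> b)"
    and "\<nu> (Or a b) \<in> mor (\<nu> a) (\<nu> b)" "\<nu> (Imp a b) \<in> mimp (\<nu> a) (\<nu> b)"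
  using assms unfolding valuation_def by auto

lemma rules_sound:
  assumes "valuation \<nu>" and "holds \<nu> s" and "rules s \<noteq> []"
  shows "\<exists>B\<in>set (rules s). \<forall>x\<in>set B. holds \<nu> x"
proof -
  obtain L a where s: "s = (L, a)" by (cases s)
  show ?thesis
  proof (cases a)
    case (Var x)
    then show ?thesis using assms(3) s by (cases L) auto
  next
    case (Neg b)
    then show ?thesis using assms(2) s valuationD(1)[OF assms(1), of b]
      by (cases L; cases "\<nu> b") (auto simp: Dset_def)
  next
    case (And b c)
    then show ?thesis using assms(2) s valuationD(2)[OF assms(1), of b c]
      by (cases L; cases "\<nu> b"; cases "\<nu> c") (auto simp: Dset_def)
  next
    case (Or b c)
    then show ?thesis using assms(2) s valuationD(3)[OF assms(1), of b c]
      by (cases L; cases "\<nu> b"; cases "\<nu> c") (auto simp: Dset_def)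
  next
    case (Imp b c)
    then show ?thesis using assms(2) s valuationD(4)[OF assms(1), of b c]
      by (cases L; cases "\<nu> b"; cases "\<nu> c") (auto simp: Dset_def)
  qed
qed

lemma FC1_contradiction_not_t:
  assumes "\<nu> \<in> FC1"
  shows "\<nu> (And \<psi> (Neg \<psi>)) \<noteq> vt"
proof -
  have v: "valuation \<nu>" and t: "\<nu> \<psi> = vt \<Longrightarrow> \<nu> (And \<psi> (Neg \<psi>)) = vT"
    using assms unfolding FC1_def by auto
  show ?thesis
    using t valuationD(1)[OF v, of \<psi>] valuationD(2)[OF v, of \<psi> "Neg \<psi>"]
    by (cases "\<nu> \<psi>"; cases "\<nu> (Neg \<psi>)") (auto simp: Dset_def)
qed

lemma branch_closed_unsat:
  assumes "\<nu> \<in> FC1" and "branch_closed S"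
  shows "\<not> (\<forall>s\<in>S. holds \<nu> s)"
proof
  assume all: "\<forall>s\<in>S. holds \<nu> s"
  from assms(2) show False
    unfolding branch_closed_def
  proof (elim disjE exE conjE)
    fix L L' \<psi> assume "L \<noteq> L'" "(L, \<psi>) \<in> S" "(L', \<psi>) \<in> S"
    then have "holds \<nu> (L, \<psi>)" "holds \<nu> (L', \<psi>)" using all by blast+
    then have "lbl_value L = lbl_value L'" by simp
    with \<open>L \<noteq> L'\<close> show False using lbl_value_inj by blast
  next
    fix \<psi> assume "(Lt, And \<psi> (Neg \<psi>)) \<in> S"
    then show False using all FC1_contradiction_not_t[OF assms(1)] by fastforce
  qed
qed

lemma closable_unsat:
  assumes "closable S" and "\<nu> \<in> FC1"
  shows "\<not> (\<forall>s\<in>S. holds \<nu> s)"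
  using assms(1)
proof (induction S rule: closable.induct)
  case (cl_closed S)
  then show ?case using branch_closed_unsat[OF assms(2)] by blast
next
  case (cl_rule s S)
  have "valuation \<nu>" using assms(2) unfolding FC1_def by auto
  then show ?case using rules_sound cl_rule by blast
qed

lemma valuation_Imp_designated:
  assumes "valuation \<nu>" and "\<nu> (Imp a b) \<noteq> vF" and "\<nu> a \<in> Dset"
  shows "\<nu> b \<in> Dset"
  using assms valuationD(4)[OF assms(1), of a b]
  by (cases "\<nu> a"; cases "\<nu> b") (auto simp: Dset_def)

lemma valuation_foldr_Imp_designated:
  assumes "valuation \<nu>" and "\<nu> ` set gs \<subseteq> Dset" and "\<nu> (foldr Imp gs \<phi>) \<noteq> vF"
  shows "\<nu> \<phi> \<in> Dset"
  using assms(2,3)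
proof (induction gs)
  case Nil
  then show ?case by (cases "\<nu> \<phi>") (auto simp: Dset_def)
next
  case (Cons g gs)
  then show ?case
    using valuation_Imp_designated[OF assms(1), of g "foldr Imp gs \<phi>"]
    by (cases "\<nu> (foldr Imp gs \<phi>) = vF") (auto simp: Dset_def)
qed

theorem mainTheorem14:
  fixes \<Gamma> :: "'v fm set" and \<phi> :: "'v fm"
  assumes "finite \<Gamma>"
    and "T1_derives \<Gamma> \<phi>"
  shows "RN_entails \<Gamma> \<phi>"
  unfolding RN_entails_def
proof (intro ballI impI)
  fix \<nu> :: "'v fm \<Rightarrow> tv"
  assume \<nu>: "\<nu> \<in> FC1" and designated: "\<nu> ` \<Gamma> \<subseteq> Dset"
  obtain gs where gs: "set gs = \<Gamma>" "closable {(LF, foldr Imp gs \<phi>)}"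
    using assms(2) unfolding T1_derives_def T1_proves_def by blast
  have "\<nu> (foldr Imp gs \<phi>) \<noteq> vF"
    using closable_unsat[OF gs(2) \<nu>] by simp
  moreover have "valuation \<nu>" using \<nu> unfolding FC1_def by auto
  ultimately show "\<nu> \<phi> \<in> Dset"
    using valuation_foldr_Imp_designated designated gs(1) by blast
qed

end
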